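(* For every positive integer $n$ there exists an addition chain producing $2^n-1$ whose length $\delta(2^n-1)$ satisfies $$\delta(2^n-1)\leq 2n-1-2\left\lfloor \frac{n-1}{2^{\lfloor \frac{\log n}{\log 2}\rfloor}}\right\rfloor+\left\lfloor \frac{\log n}{\log 2}\right\rfloor.$$
   Context: An addition chain producing $N$ is a sequence $1,2,s_3,\ldots,s_k=N$ (or just $1$ for $N=1$) in which every term after the first is the sum of two (not necessarily distinct) earlier terms; its length is the number of terms excluding the initial $1$. $\lfloor\cdot\rfloor$ is the floor function and $\log$ the natural logarithm. *)

theory Defs
  imports Complex_Main
begin

definition addition_chain :: "nat list \<Rightarrow> nat \<Rightarrow> bool" where
  "addition_chain xs N \<longleftrightarrow>
     xs \<noteq> [] \<and> hd xs = 1 \<and> last xs = N \<and>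
     (\<forall>k. 0 < k \<and> k < length xs \<longrightarrow>
        (\<exists>i j. i < k \<and> j < k \<and> xs ! k = xs ! i + xs ! j))"

definition chain_length :: "nat list \<Rightarrow> nat" where
  "chain_length xs = length xs - 1"

end

theory Submission
  imports Defs
begin

text \<open>The binary chain 1, 2, 3, 6, 7, ..., 2^n - 2, 2^n - 1, alternating a doubling and an
  increment, already has length 2(n - 1).  The quotient (n - 1) / 2^m with m = floor(log2 n)
  is below 2, so its floor is at most 1, and for n \<ge> 2 we have m \<ge> 1; hence the claimed
  bound is at least 2(n - 1).\<close>

lemma addition_chain_snoc:
  assumes chain: "addition_chain xs N"
    and "i < length xs" "j < length xs"
  shows "addition_chain (xs @ [xs ! i + xs ! j]) (xs ! i + xs ! j)"
  unfolding addition_chain_def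
proof (intro conjI allI impI)
  show "hd (xs @ [xs ! i + xs ! j]) = 1"
    using chain by (simp add: addition_chain_def)
  fix k
  assume k: "0 < k \<and> k < length (xs @ [xs ! i + xs ! j])"
  show "\<exists>i' j'. i' < k \<and> j' < k \<and>
    (xs @ [xs ! i + xs ! j]) ! k = (xs @ [xs ! i + xs ! j]) ! i' + (xs @ [xs ! i + xs ! j]) ! j'"
  proof (cases "k < length xs")
    case True
    then obtain i' j' where "i' < k" "j' < k" "xs ! k = xs ! i' + xs ! j'"
      using chain k by (auto simp: addition_chain_def)
    with True show ?thesis
      by (intro exI[of _ i'] exI[of _ j']) (simp add: nth_append)
  next
    case False
    with k have "k = length xs" by simp
    with assms(2,3) show ?thesis
      by (intro exI[of _ i] exI[of _ j]) (simp add: nth_append)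
  qed
qed simp_all

lemma addition_chain_double_succ:
  assumes "addition_chain xs N"
  shows "addition_chain (xs @ [2 * N, 2 * N + 1]) (2 * N + 1)"
proof -
  have "xs \<noteq> []" "xs ! 0 = 1" "xs ! (length xs - 1) = N"
    using assms by (auto simp: addition_chain_def hd_conv_nth last_conv_nth)
  then have double: "addition_chain (xs @ [2 * N]) (2 * N)"
    using addition_chain_snoc[OF assms, of "length xs - 1" "length xs - 1"] by (simp add: mult_2)
  have "(xs @ [2 * N]) ! length xs + (xs @ [2 * N]) ! 0 = 2 * N + 1"
    using \<open>xs \<noteq> []\<close> \<open>xs ! 0 = 1\<close> by (simp add: nth_append)
  then show ?thesis
    using addition_chain_snoc[OF double, of "length xs" 0] by simp
qed

lemma addition_chain_mersenne:
  "\<exists>c. addition_chain c (2 ^ Suc k - 1) \<and> chain_length c = 2 * k"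
proof (induction k)
  case 0
  have "addition_chain [1] 1" by (auto simp: addition_chain_def)
  then show ?case by (auto simp: chain_length_def)
next
  case (Suc k)
  then obtain c where c: "addition_chain c (2 ^ Suc k - 1)" "chain_length c = 2 * k"
    by blast
  have mersenne_succ: "2 * (2 ^ Suc k - 1) + 1 = (2 ^ Suc (Suc k) - 1 :: nat)"
    by (induction k) auto
  let ?c = "c @ [2 * (2 ^ Suc k - 1), 2 ^ Suc (Suc k) - 1]"
  have "addition_chain ?c (2 ^ Suc (Suc k) - 1)"
    using addition_chain_double_succ[OF c(1)] unfolding mersenne_succ .
  moreover have "chain_length ?c = 2 * Suc k"
    using c by (cases c) (auto simp: addition_chain_def chain_length_def)
  ultimately show ?case by blast
qed

lemma floor_shifted_div_pow2_floor_log_le_1: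
  fixes x :: real
  assumes "x > 0"
  shows "\<lfloor>(x - 1) / 2 powr \<lfloor>log 2 x\<rfloor>\<rfloor> \<le> 1"
proof -
  have "x = 2 powr log 2 x" using assms by simp
  also have "\<dots> < 2 powr (\<lfloor>log 2 x\<rfloor> + 1)" by simp
  also have "\<dots> = 2 * 2 powr \<lfloor>log 2 x\<rfloor>" by (simp add: powr_add)
  finally have "(x - 1) / 2 powr \<lfloor>log 2 x\<rfloor> < 2" by (simp add: field_simps)
  then show ?thesis by linarith
qed

theorem mainTheorem10:
  fixes n :: nat
  assumes "n \<ge> 1"
  shows "\<exists>c. addition_chain c (2 ^ n - 1) \<and>
    real (chain_length c) \<le>
      2 * real n - 1
      - 2 * of_int \<lfloor>(real n - 1) / 2 powr of_int \<lfloor>ln (real n) / ln 2\<rfloor>\<rfloor>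
      + of_int \<lfloor>ln (real n) / ln 2\<rfloor>"
proof -
  obtain c where c: "addition_chain c (2 ^ n - 1)" "chain_length c = 2 * (n - 1)"
    using addition_chain_mersenne[of "n - 1"] assms by auto
  define m where "m = \<lfloor>log 2 (real n)\<rfloor>"
  have quotient_le: "\<lfloor>(real n - 1) / 2 powr m\<rfloor> \<le> 1"
    unfolding m_def using floor_shifted_div_pow2_floor_log_le_1 assms by simp
  have "real (2 * (n - 1)) \<le> 2 * real n - 1 - 2 * \<lfloor>(real n - 1) / 2 powr m\<rfloor> + m"
  proof (cases "n = 1")
    case True
    then show ?thesis by (simp add: m_def)
  next
    case False
    with assms have "m \<ge> 1" by (simp add: m_def le_log_iff)
    moreover have "real (2 * (n - 1)) = 2 * real n - 2" using assms by (simp add: of_nat_diff)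
    ultimately show ?thesis using quotient_le by linarith
  qed
  moreover have "ln (real n) / ln 2 = log 2 (real n)" by (simp add: log_def)
  ultimately show ?thesis
    using c by (auto simp: m_def)
qed

end
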